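(* Let $S=\{s_1,\dots,s_p\}$ and let $F=\{C_1,\dots,C_q\}$ be a family of subsets of $S$ with $q\le p$ and $\bigcup_j C_j=S$. Construct the graph $G$ as follows: vertices $a_1,\dots,a_p$, $b_1,\dots,b_q$, $z_1,\dots,z_p$, $u,v,u'$; edges $a_ib_j$ whenever $s_i\in C_j$, $a_iz_i$ for all $i\in[p]$, $ub_j$ for all $j\in[q]$, and $uv$, $vu'$. Then $G$ is a star-convex bipartite graph with parts $X=\{a_1,\dots,a_p,u,u'\}$ and $Y=\{b_1,\dots,b_q,z_1,\dots,z_p,v\}$ (with respect to the star on $X$ centred at $u$), and for every nonnegative integer $t$, $S$ has a cover of size at most $t$ if and only if $G$ has a vertex-edge dominating set of size at most $t+1$.
   Context: A cover of $S$ in the set system $(S,F)$ is a subfamily $C\subseteq F$ whose union is $S$. A vertex-edge dominating set of a graph $G$ is a set $D\subseteq V(G)$ such that for every edge $uv$, $(N_G[u]\cup N_G[v])\cap D\neq\emptyset$, where $N_G[x]$ is the closed neighbourhood of $x$. A star is a tree with exactly one non-pendant vertex. A bipartite graph $G=(X\cup Y,E)$ is star-convex if there is a star $T$ with vertex set $X$ such that for every $y\in Y$, $N_G(y)$ induces a subtree of $T$. *)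

theory Defs
  imports Main
begin

definition graph :: "'v set \<Rightarrow> 'v set set \<Rightarrow> bool" where
  "graph V E \<longleftrightarrow> finite V \<and> (\<forall>e\<in>E. e \<subseteq> V \<and> card e = 2)"

definition adj :: "'v set set \<Rightarrow> 'v \<Rightarrow> 'v \<Rightarrow> bool" where
  "adj E x y \<longleftrightarrow> {x, y} \<in> E \<and> x \<noteq> y"

definition nbhd :: "'v set set \<Rightarrow> 'v \<Rightarrow> 'v set" where
  "nbhd E x = {y. adj E x y}"

definition closed_nbhd :: "'v set set \<Rightarrow> 'v \<Rightarrow> 'v set" where
  "closed_nbhd E x = insert x (nbhd E x)"

definition degree :: "'v set set \<Rightarrow> 'v \<Rightarrow> nat" where
  "degree E x = card (nbhd E x)"

definition connected_graph :: "'v set \<Rightarrow> 'v set set \<Rightarrow> bool" where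
  "connected_graph V E \<longleftrightarrow>
     (\<forall>x\<in>V. \<forall>y\<in>V. (x, y) \<in> {(a, b). adj E a b}\<^sup>*)"

definition is_tree :: "'v set \<Rightarrow> 'v set set \<Rightarrow> bool" where
  "is_tree V E \<longleftrightarrow> graph V E \<and> V \<noteq> {} \<and> connected_graph V E \<and> card E = card V - 1"

definition is_star :: "'v set \<Rightarrow> 'v set set \<Rightarrow> bool" where
  "is_star V E \<longleftrightarrow> is_tree V E \<and> (\<exists>!c. c \<in> V \<and> degree E c \<noteq> 1)"

definition induced_edges :: "'v set set \<Rightarrow> 'v set \<Rightarrow> 'v set set" where
  "induced_edges E W = {e \<in> E. e \<subseteq> W}"

definition bipartite_parts :: "'v set \<Rightarrow> 'v set set \<Rightarrow> 'v set \<Rightarrow> 'v set \<Rightarrow> bool" where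
  "bipartite_parts V E X Y \<longleftrightarrow> graph V E \<and> X \<inter> Y = {} \<and> X \<union> Y = V \<and>
     (\<forall>e\<in>E. \<exists>x\<in>X. \<exists>y\<in>Y. e = {x, y})"

definition star_convex_wrt ::
  "'v set \<Rightarrow> 'v set set \<Rightarrow> 'v set \<Rightarrow> 'v set \<Rightarrow> 'v set set \<Rightarrow> bool" where
  "star_convex_wrt V E X Y T \<longleftrightarrow> bipartite_parts V E X Y \<and> is_star X T \<and>
     (\<forall>y\<in>Y. is_tree (nbhd E y) (induced_edges T (nbhd E y)))"

definition star_convex_bipartite :: "'v set \<Rightarrow> 'v set set \<Rightarrow> 'v set \<Rightarrow> 'v set \<Rightarrow> bool" where
  "star_convex_bipartite V E X Y \<longleftrightarrow> (\<exists>T. star_convex_wrt V E X Y T)"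

definition ve_dominating :: "'v set \<Rightarrow> 'v set set \<Rightarrow> 'v set \<Rightarrow> bool" where
  "ve_dominating V E D \<longleftrightarrow> D \<subseteq> V \<and>
     (\<forall>x y. {x, y} \<in> E \<longrightarrow> (closed_nbhd E x \<union> closed_nbhd E y) \<inter> D \<noteq> {})"

definition is_cover :: "'a set \<Rightarrow> 'a set set \<Rightarrow> 'a set set \<Rightarrow> bool" where
  "is_cover S F Cv \<longleftrightarrow> Cv \<subseteq> F \<and> \<Union>Cv = S"

text \<open>The constructed graph. Elements s_i of S are identified with i \<in> {1..p},
  sets C_j are given by C j for j \<in> {1..q}.\<close>
datatype vtx = A nat | B nat | Z nat | U | Vv | U'

definition red_V :: "nat \<Rightarrow> nat \<Rightarrow> vtx set" where
  "red_V p q = A ` {1..p} \<union> B ` {1..q} \<union> Z ` {1..p} \<union> {U, Vv, U'}"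

definition red_E :: "nat \<Rightarrow> nat \<Rightarrow> (nat \<Rightarrow> nat set) \<Rightarrow> vtx set set" where
  "red_E p q C =
     {{A i, B j} | i j. i \<in> {1..p} \<and> j \<in> {1..q} \<and> i \<in> C j}
   \<union> {{A i, Z i} | i. i \<in> {1..p}}
   \<union> {{U, B j} | j. j \<in> {1..q}}
   \<union> {{U, Vv}, {Vv, U'}}"

definition red_X :: "nat \<Rightarrow> vtx set" where
  "red_X p = A ` {1..p} \<union> {U, U'}"

definition red_Y :: "nat \<Rightarrow> nat \<Rightarrow> vtx set" where
  "red_Y p q = B ` {1..q} \<union> Z ` {1..p} \<union> {Vv}"

definition red_T :: "nat \<Rightarrow> vtx set set" where
  "red_T p = {{U, x} | x. x \<in> red_X p \<and> x \<noteq> U}"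

end

theory Submission
  imports Defs
begin

(* A cover {C_j : j \<in> J} gives the dominating set {v} \<union> {b_j : j \<in> J}: v dominates every
   edge at u or v, and every other edge contains some a_i, which is adjacent to a b_j with
   s_i \<in> C_j. Conversely, the edge v u' forces a vertex of {u, v, u'} into a dominating set D,
   and each remaining vertex of D can be traded for a set: b_j for C_j, and a_i or z_i for some
   set containing s_i. Since every edge a_i z_i is dominated, the traded sets cover S, and there
   are at most |D| - 1 of them. *)

definition star_edges :: "'v \<Rightarrow> 'v set \<Rightarrow> 'v set set" where
  "star_edges c W = {{c, x} | x. x \<in> W \<and> x \<noteq> c}"

lemma adj_star_edges:
  "adj (star_edges c W) x y \<longleftrightarrow>
     (x = c \<and> y \<in> W \<and> y \<noteq> c) \<or> (y = c \<and> x \<in> W \<and> x \<noteq> c)"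
  unfolding adj_def star_edges_def by (auto simp: doubleton_eq_iff)

lemma is_tree_star_edges:
  assumes "finite W" "c \<in> W"
  shows "is_tree W (star_edges c W)"
proof -
  let ?R = "{(a, b). adj (star_edges c W) a b}"
  have "graph W (star_edges c W)"
    unfolding graph_def star_edges_def using assms by auto
  moreover have "(x, c) \<in> ?R\<^sup>*" "(c, x) \<in> ?R\<^sup>*" if "x \<in> W" for x
    using that by (cases "x = c"; auto simp: adj_star_edges intro: r_into_rtrancl)+
  then have "connected_graph W (star_edges c W)"
    unfolding connected_graph_def by (meson rtrancl_trans)
  moreover have "star_edges c W = (\<lambda>x. {c, x}) ` (W - {c})"
    unfolding star_edges_def by auto
  then have "card (star_edges c W) = card W - 1"
    using assms by (simp add: card_image inj_on_def doubleton_eq_iff)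
  ultimately show ?thesis
    unfolding is_tree_def using assms by auto
qed

lemma is_star_star_edges:
  assumes "finite W" "c \<in> W" "card W \<noteq> 2"
  shows "is_star W (star_edges c W)"
proof -
  have "nbhd (star_edges c W) c = W - {c}"
    using assms unfolding nbhd_def by (auto simp: adj_star_edges)
  then have "degree (star_edges c W) c \<noteq> 1"
    unfolding degree_def using assms by simp
  moreover have "degree (star_edges c W) x = 1" if "x \<in> W" "x \<noteq> c" for x
  proof -
    have "nbhd (star_edges c W) x = {c}"
      using that assms unfolding nbhd_def by (auto simp: adj_star_edges)
    then show ?thesis unfolding degree_def by simp
  qed
  ultimately show ?thesis
    unfolding is_star_def using is_tree_star_edges[OF assms(1,2)] assms(2) by metis
qed

lemma is_tree_induced_star_edges:
  assumes "W' \<subseteq> W" "finite W'" "c \<in> W' \<or> (\<exists>x. W' = {x})"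
  shows "is_tree W' (induced_edges (star_edges c W) W')"
  using assms(3)
proof
  assume "c \<in> W'"
  then have "induced_edges (star_edges c W) W' = star_edges c W'"
    using assms(1) unfolding induced_edges_def star_edges_def by auto
  then show ?thesis using is_tree_star_edges[OF assms(2) \<open>c \<in> W'\<close>] by simp
next
  assume "\<exists>x. W' = {x}"
  then obtain x where "W' = {x}" by blast
  moreover have "induced_edges (star_edges c W) {x} = {}"
    unfolding induced_edges_def star_edges_def by auto
  ultimately show ?thesis
    unfolding is_tree_def graph_def connected_graph_def by auto
qed

lemma is_cover_image_iff:
  assumes "finite I"
  shows "(\<exists>Cv. is_cover S (f ` I) Cv \<and> card Cv \<le> t) \<longleftrightarrow> (\<exists>J\<subseteq>I. (\<Union>j\<in>J. f j) = S \<and> card J \<le> t)"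
proof
  assume "\<exists>Cv. is_cover S (f ` I) Cv \<and> card Cv \<le> t"
  then obtain Cv where "Cv \<subseteq> f ` I" "\<Union>Cv = S" "card Cv \<le> t"
    unfolding is_cover_def by blast
  moreover obtain J where "J \<subseteq> I" "inj_on f J" "Cv = f ` J"
    using subset_image_inj \<open>Cv \<subseteq> f ` I\<close> by metis
  ultimately show "\<exists>J\<subseteq>I. (\<Union>j\<in>J. f j) = S \<and> card J \<le> t"
    by (metis card_image)
next
  assume "\<exists>J\<subseteq>I. (\<Union>j\<in>J. f j) = S \<and> card J \<le> t"
  then obtain J where "J \<subseteq> I" "(\<Union>j\<in>J. f j) = S" "card J \<le> t"
    by blast
  moreover have "card (f ` J) \<le> card J"
    using \<open>J \<subseteq> I\<close> assms finite_subset card_image_le by blast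
  ultimately show "\<exists>Cv. is_cover S (f ` I) Cv \<and> card Cv \<le> t"
    unfolding is_cover_def by (metis image_mono order_trans)
qed

lemma red_T_eq_star_edges: "red_T p = star_edges U (red_X p)"
  unfolding red_T_def star_edges_def by auto

lemma card_red_X: "card (red_X p) = p + 2"
proof -
  have "red_X p = insert U (insert U' (A ` {1..p}))"
    unfolding red_X_def by auto
  moreover have "card (A ` {1..p}) = p"
    by (simp add: card_image inj_on_def)
  ultimately show ?thesis by (simp add: image_iff)
qed

lemma red_E_cases:
  assumes "e \<in> red_E p q C"
  obtains (AB) i j where "i \<in> {1..p}" "j \<in> {1..q}" "i \<in> C j" "e = {A i, B j}"
    | (AZ) i where "i \<in> {1..p}" "e = {A i, Z i}"
    | (UB) j where "j \<in> {1..q}" "e = {U, B j}"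
    | (UVv) "e = {U, Vv}"
    | (VvU') "e = {Vv, U'}"
  using assms unfolding red_E_def by blast

lemma nbhd_red_A:
  "i \<in> {1..p} \<Longrightarrow> nbhd (red_E p q C) (A i) = insert (Z i) (B ` {j \<in> {1..q}. i \<in> C j})"
  unfolding nbhd_def adj_def red_E_def by (auto simp: doubleton_eq_iff)

lemma nbhd_red_B:
  "j \<in> {1..q} \<Longrightarrow> nbhd (red_E p q C) (B j) = insert U (A ` {i \<in> {1..p}. i \<in> C j})"
  unfolding nbhd_def adj_def red_E_def by (auto simp: doubleton_eq_iff)

lemma nbhd_red_Z: "i \<in> {1..p} \<Longrightarrow> nbhd (red_E p q C) (Z i) = {A i}"
  unfolding nbhd_def adj_def red_E_def by (auto simp: doubleton_eq_iff)

lemma nbhd_red_U: "nbhd (red_E p q C) U = insert Vv (B ` {1..q})"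
  unfolding nbhd_def adj_def red_E_def by (auto simp: doubleton_eq_iff)

lemma nbhd_red_Vv: "nbhd (red_E p q C) Vv = {U, U'}"
  unfolding nbhd_def adj_def red_E_def by (auto simp: doubleton_eq_iff)

lemma nbhd_red_U': "nbhd (red_E p q C) U' = {Vv}"
  unfolding nbhd_def adj_def red_E_def by (auto simp: doubleton_eq_iff)

lemma red_E_vertex_cover:
  assumes "{x, y} \<in> red_E p q C"
  shows "x \<in> A ` {1..p} \<union> {U, Vv} \<or> y \<in> A ` {1..p} \<union> {U, Vv}"
  using assms by (cases rule: red_E_cases) (auto simp: doubleton_eq_iff)

lemma bipartite_parts_red: "bipartite_parts (red_V p q) (red_E p q C) (red_X p) (red_Y p q)"
proof -
  have "e \<subseteq> red_V p q \<and> card e = 2" if "e \<in> red_E p q C" for e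
    using that by (cases rule: red_E_cases) (auto simp: red_V_def)
  moreover have "finite (red_V p q)"
    unfolding red_V_def by simp
  moreover have "\<exists>x\<in>red_X p. \<exists>y\<in>red_Y p q. e = {x, y}" if "e \<in> red_E p q C" for e
    using that
  proof (cases rule: red_E_cases)
    case VvU'
    then have "e = {U', Vv}"
      by auto
    then show ?thesis
      unfolding red_X_def red_Y_def by blast
  qed (unfold red_X_def red_Y_def, blast+)
  moreover have "red_X p \<inter> red_Y p q = {}" "red_X p \<union> red_Y p q = red_V p q"
    unfolding red_X_def red_Y_def red_V_def by auto
  ultimately show ?thesis
    unfolding bipartite_parts_def graph_def by blast
qed

lemma star_convex_wrt_red:
  assumes "p \<ge> 1"
  shows "star_convex_wrt (red_V p q) (red_E p q C) (red_X p) (red_Y p q) (red_T p)"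
proof -
  have "is_star (red_X p) (red_T p)"
    unfolding red_T_eq_star_edges
    using assms card_red_X[of p] by (intro is_star_star_edges) (auto simp: red_X_def)
  moreover have "is_tree (nbhd (red_E p q C) y) (induced_edges (red_T p) (nbhd (red_E p q C) y))"
    if "y \<in> red_Y p q" for y
    using that unfolding red_T_eq_star_edges red_Y_def
    by (auto simp: nbhd_red_B nbhd_red_Z nbhd_red_Vv red_X_def
        intro!: is_tree_induced_star_edges)
  ultimately show ?thesis
    unfolding star_convex_wrt_def using bipartite_parts_red by blast
qed

lemma ve_dominating_red_of_cover:
  assumes "J \<subseteq> {1..q}" "{1..p} \<subseteq> (\<Union>j\<in>J. C j)"
  shows "ve_dominating (red_V p q) (red_E p q C) (insert Vv (B ` J))"
proof -
  let ?E = "red_E p q C" and ?D = "insert Vv (B ` J)"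
  have dominated: "closed_nbhd ?E x \<inter> ?D \<noteq> {}" if x: "x \<in> A ` {1..p} \<union> {U, Vv}" for x
  proof -
    consider (A) i where "i \<in> {1..p}" "x = A i" | (U) "x = U" | (Vv) "x = Vv"
      using x by blast
    then show ?thesis
    proof cases
      case A
      then obtain j where "j \<in> J" "i \<in> C j"
        using assms(2) by blast
      then have "B j \<in> nbhd ?E (A i)"
        using assms(1) by (auto simp: nbhd_red_A[OF A(1)])
      then show ?thesis
        using \<open>j \<in> J\<close> A(2) unfolding closed_nbhd_def by blast
    qed (simp_all add: closed_nbhd_def nbhd_red_U)
  qed
  show ?thesis
    unfolding ve_dominating_def
  proof (intro conjI allI impI)
    show "?D \<subseteq> red_V p q"
      using assms(1) by (auto simp: red_V_def)
    fix x y
    assume "{x, y} \<in> ?E"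
    then have "x \<in> A ` {1..p} \<union> {U, Vv} \<or> y \<in> A ` {1..p} \<union> {U, Vv}"
      by (rule red_E_vertex_cover)
    then show "(closed_nbhd ?E x \<union> closed_nbhd ?E y) \<inter> ?D \<noteq> {}"
      using dominated[of x] dominated[of y] by blast
  qed
qed

lemma cover_of_ve_dominating_red:
  assumes "\<forall>j\<in>{1..q}. C j \<subseteq> {1..p}" "(\<Union>j\<in>{1..q}. C j) = {1..p}"
    and "ve_dominating (red_V p q) (red_E p q C) D"
  obtains J where "J \<subseteq> {1..q}" "(\<Union>j\<in>J. C j) = {1..p}" "card J + 1 \<le> card D"
proof -
  let ?E = "red_E p q C"
  have D_sub: "D \<subseteq> red_V p q"
    and dom: "\<And>x y. {x, y} \<in> ?E \<Longrightarrow> (closed_nbhd ?E x \<union> closed_nbhd ?E y) \<inter> D \<noteq> {}"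
    using assms(3) unfolding ve_dominating_def by auto
  have "finite D"
    using D_sub finite_subset unfolding red_V_def by blast
  have "\<forall>i\<in>{1..p}. \<exists>j. j \<in> {1..q} \<and> i \<in> C j"
    using assms(2) by blast
  then obtain h where h: "\<And>i. i \<in> {1..p} \<Longrightarrow> h i \<in> {1..q} \<and> i \<in> C (h i)"
    by metis
  define index where
    "index v = (case v of A i \<Rightarrow> h i | B j \<Rightarrow> j | Z i \<Rightarrow> h i | _ \<Rightarrow> 0)" for v
  define D' where "D' = D - {U, Vv, U'}"
  define J where "J = index ` D'"
  have "closed_nbhd ?E Vv \<union> closed_nbhd ?E U' = {U, Vv, U'}"
    by (auto simp: closed_nbhd_def nbhd_red_Vv nbhd_red_U')
  moreover have "{Vv, U'} \<in> ?E"
    unfolding red_E_def by auto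
  ultimately have "D \<inter> {U, Vv, U'} \<noteq> {}"
    using dom[of Vv U'] by (simp add: Int_commute)
  then have "D' \<subset> D"
    unfolding D'_def by blast
  then have "card D' < card D"
    by (rule psubset_card_mono[OF \<open>finite D\<close>])
  moreover have "card J \<le> card D'"
    unfolding J_def D'_def using \<open>finite D\<close> by (simp add: card_image_le)
  ultimately have card_J: "card J + 1 \<le> card D"
    by linarith
  have J_sub: "J \<subseteq> {1..q}"
  proof
    fix j
    assume "j \<in> J"
    then obtain d where "d \<in> D'" "j = index d"
      unfolding J_def by blast
    moreover have "d \<in> A ` {1..p} \<union> B ` {1..q} \<union> Z ` {1..p}"
      using \<open>d \<in> D'\<close> D_sub unfolding D'_def red_V_def by blast
    ultimately show "j \<in> {1..q}"
      using h unfolding index_def by auto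
  qed
  have "i \<in> (\<Union>j\<in>J. C j)" if i: "i \<in> {1..p}" for i
  proof -
    have "{A i, Z i} \<in> ?E"
      using i unfolding red_E_def by auto
    then obtain d where "d \<in> D" "d \<in> closed_nbhd ?E (A i) \<union> closed_nbhd ?E (Z i)"
      using dom by blast
    then have "d \<in> D'" and "i \<in> C (index d)"
      using h[OF i] unfolding D'_def index_def
      by (auto simp: closed_nbhd_def nbhd_red_A[OF i] nbhd_red_Z[OF i])
    then show ?thesis
      unfolding J_def by blast
  qed
  moreover have "(\<Union>j\<in>J. C j) \<subseteq> {1..p}"
    using J_sub assms(1) by blast
  ultimately have "(\<Union>j\<in>J. C j) = {1..p}"
    by blast
  then show ?thesis
    using that J_sub card_J by blast
qed

lemma ve_domination_red_iff_cover:
  assumes "\<forall>j\<in>{1..q}. C j \<subseteq> {1..p}" "(\<Union>j\<in>{1..q}. C j) = {1..p}"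
  shows "(\<exists>J\<subseteq>{1..q}. (\<Union>j\<in>J. C j) = {1..p} \<and> card J \<le> t)
     \<longleftrightarrow> (\<exists>D. ve_dominating (red_V p q) (red_E p q C) D \<and> card D \<le> t + 1)"
proof
  assume "\<exists>J\<subseteq>{1..q}. (\<Union>j\<in>J. C j) = {1..p} \<and> card J \<le> t"
  then obtain J where J: "J \<subseteq> {1..q}" "(\<Union>j\<in>J. C j) = {1..p}" "card J \<le> t"
    by blast
  have "ve_dominating (red_V p q) (red_E p q C) (insert Vv (B ` J))"
    using J(1,2) by (simp add: ve_dominating_red_of_cover)
  moreover have "finite J"
    using J(1) finite_subset by blast
  then have "card (insert Vv (B ` J)) = card J + 1"
    by (simp add: card_image inj_on_def image_iff)
  ultimately show "\<exists>D. ve_dominating (red_V p q) (red_E p q C) D \<and> card D \<le> t + 1"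
    using J(3) by (intro exI[of _ "insert Vv (B ` J)"]) simp
next
  assume "\<exists>D. ve_dominating (red_V p q) (red_E p q C) D \<and> card D \<le> t + 1"
  then obtain D where "ve_dominating (red_V p q) (red_E p q C) D" "card D \<le> t + 1"
    by blast
  moreover obtain J where "J \<subseteq> {1..q}" "(\<Union>j\<in>J. C j) = {1..p}" "card J + 1 \<le> card D"
    using cover_of_ve_dominating_red[OF assms \<open>ve_dominating _ _ D\<close>] .
  ultimately show "\<exists>J\<subseteq>{1..q}. (\<Union>j\<in>J. C j) = {1..p} \<and> card J \<le> t"
    by (intro exI[of _ J]) simp
qed

theorem lemma3:
  fixes p q :: nat and C :: "nat \<Rightarrow> nat set"
  assumes "p \<ge> 1"
    and "q \<le> p"
    and "\<forall>j\<in>{1..q}. C j \<subseteq> {1..p}"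
    and "(\<Union>j\<in>{1..q}. C j) = {1..p}"
  shows "star_convex_wrt (red_V p q) (red_E p q C) (red_X p) (red_Y p q) (red_T p)
       \<and> star_convex_bipartite (red_V p q) (red_E p q C) (red_X p) (red_Y p q)
       \<and> (\<forall>t::nat. (\<exists>Cv. is_cover {1..p} (C ` {1..q}) Cv \<and> card Cv \<le> t)
             \<longleftrightarrow> (\<exists>D. ve_dominating (red_V p q) (red_E p q C) D \<and> card D \<le> t + 1))"
proof -
  have "(\<exists>Cv. is_cover {1..p} (C ` {1..q}) Cv \<and> card Cv \<le> t)
      \<longleftrightarrow> (\<exists>D. ve_dominating (red_V p q) (red_E p q C) D \<and> card D \<le> t + 1)" for t
    using is_cover_image_iff[where I = "{1..q}" and S = "{1..p}" and f = C and t = t]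
      ve_domination_red_iff_cover[OF assms(3,4), of t] by simp
  then show ?thesis
    using star_convex_wrt_red[OF assms(1)] unfolding star_convex_bipartite_def by blast
qed

end
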